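(* Let $\langle B,\wedge,{}'\rangle$ be an algebra with $\wedge$ binary and ${}'$ unary satisfying $x\wedge y\approx y\wedge x$, $x\wedge(y\wedge z)\approx(x\wedge y)\wedge z$, $x''\approx x$, and $x'\approx (x\wedge y)'\wedge(x\wedge y')'$. Then for all $x,z\in B$, writing $0=z\wedge z'$, we have $0'\wedge(x\wedge x)'=x'$.
   Context: In such an algebra the element $z\wedge z'$ does not depend on $z$; the paper denotes it $0$. *)

theory Defs
  imports Main
begin

end

theory Submission
  imports Defs
begin

text \<open>In Huntington's equation \<open>x\<^sup>c = (x \<sqinter> y)\<^sup>c \<sqinter> (x \<sqinter> y\<^sup>c)\<^sup>c\<close> the right-hand side
  is unchanged when \<open>y\<close> is replaced by \<open>y\<^sup>c\<close>. Expanding \<open>x\<close> and \<open>y\<close> by it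
  (with complemented arguments) shows that \<open>x \<sqinter> (y\<^sup>c \<sqinter> x)\<^sup>c\<close> is symmetric in \<open>x, y\<close>,
  being the meet of \<open>(x\<^sup>c \<sqinter> y)\<^sup>c\<close>, \<open>(x \<sqinter> y\<^sup>c)\<^sup>c\<close> and \<open>(x\<^sup>c \<sqinter> y\<^sup>c)\<^sup>c\<close>. Expanding
  \<open>x\<^sup>c\<close> in \<open>x \<sqinter> x\<^sup>c\<close> and applying this symmetry turns \<open>x \<sqinter> x\<^sup>c\<close> into \<open>y \<sqinter> y\<^sup>c\<close>.
  Finally, Huntington's equation with \<open>y = x\<^sup>c\<close> reads \<open>x\<^sup>c = (x \<sqinter> x\<^sup>c)\<^sup>c \<sqinter> (x \<sqinter> x)\<^sup>c\<close>.\<close>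

locale huntington_meet =
  fixes meet :: "'a \<Rightarrow> 'a \<Rightarrow> 'a" (infixl \<open>\<sqinter>\<close> 70)
    and c :: "'a \<Rightarrow> 'a" (\<open>_\<^sup>c\<close> [999] 999)
  assumes meet_commute: "x \<sqinter> y = y \<sqinter> x"
    and meet_assoc: "x \<sqinter> (y \<sqinter> z) = x \<sqinter> y \<sqinter> z"
    and c_involutive: "x\<^sup>c\<^sup>c = x"
    and huntington: "x\<^sup>c = (x \<sqinter> y)\<^sup>c \<sqinter> (x \<sqinter> y\<^sup>c)\<^sup>c"
begin

sublocale abel_semigroup \<open>(\<sqinter>)\<close>
  by unfold_locales (simp only: meet_assoc, rule meet_commute)

lemma huntington_c: "x = (x\<^sup>c \<sqinter> y)\<^sup>c \<sqinter> (x\<^sup>c \<sqinter> y\<^sup>c)\<^sup>c"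
  using huntington [of "x\<^sup>c" y] by (simp add: c_involutive)

lemma meet_c_meet_c_commute: "x \<sqinter> (y\<^sup>c \<sqinter> x)\<^sup>c = y \<sqinter> (x\<^sup>c \<sqinter> y)\<^sup>c"
proof -
  have "x \<sqinter> (y\<^sup>c \<sqinter> x)\<^sup>c = (x\<^sup>c \<sqinter> y)\<^sup>c \<sqinter> (x\<^sup>c \<sqinter> y\<^sup>c)\<^sup>c \<sqinter> (y\<^sup>c \<sqinter> x)\<^sup>c"
    by (subst huntington_c [of x y]) (rule refl)
  also have "\<dots> = (y\<^sup>c \<sqinter> x)\<^sup>c \<sqinter> (y\<^sup>c \<sqinter> x\<^sup>c)\<^sup>c \<sqinter> (x\<^sup>c \<sqinter> y)\<^sup>c"
    by (simp add: ac_simps)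
  also have "\<dots> = y \<sqinter> (x\<^sup>c \<sqinter> y)\<^sup>c"
    by (simp flip: huntington_c)
  finally show ?thesis .
qed

lemma meet_c_eq: "x \<sqinter> x\<^sup>c = y \<sqinter> y\<^sup>c"
proof -
  have "x \<sqinter> x\<^sup>c = (x \<sqinter> y)\<^sup>c \<sqinter> (x \<sqinter> (y\<^sup>c \<sqinter> x)\<^sup>c)"
    by (subst huntington [of x y]) (simp add: ac_simps)
  also have "\<dots> = (x \<sqinter> y)\<^sup>c \<sqinter> (y \<sqinter> (x\<^sup>c \<sqinter> y)\<^sup>c)"
    by (simp only: meet_c_meet_c_commute)
  also have "\<dots> = y \<sqinter> y\<^sup>c"
    by (subst huntington [of y x]) (simp add: ac_simps)
  finally show ?thesis .
qed

lemma c_meet_c_meet_self: "(z \<sqinter> z\<^sup>c)\<^sup>c \<sqinter> (x \<sqinter> x)\<^sup>c = x\<^sup>c"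
  using huntington [of x "x\<^sup>c"] by (simp add: c_involutive meet_c_eq [of z x])

end

theorem lemma2p6:
  fixes meet :: "'a \<Rightarrow> 'a \<Rightarrow> 'a" and c :: "'a \<Rightarrow> 'a"
  assumes comm: "\<And>x y. meet x y = meet y x"
    and assoc: "\<And>x y z. meet x (meet y z) = meet (meet x y) z"
    and invol: "\<And>x. c (c x) = x"
    and ax: "\<And>x y. c x = meet (c (meet x y)) (c (meet x (c y)))"
  shows "meet (c (meet z (c z))) (c (meet x x)) = c x"
proof -
  interpret huntington_meet meet c
    using assms by unfold_locales
  show ?thesis
    by (rule c_meet_c_meet_self)
qed

end
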